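(* Let $K\subseteq\mathbb{R}^n$ be a nonempty open convex set and $h:K\to\mathbb{R}$ a continuously differentiable function. If $h$ is strongly quasiconvex with modulus $\gamma>0$ on $K$, then $h$ is CFZ-strongly quasiconvex on $K$.
   Context: For a convex set $\emptyset\neq K\subseteq\mathbb{R}^n$ and $\gamma> 0$, $h:K\to\mathbb{R}$ is strongly quasiconvex with modulus $\gamma$ on $K$ if $h(ty+(1-t)x)\le \max\{h(y),h(x)\}-t(1-t)\frac{\gamma}{2}\|x-y\|^2$ for all $x,y\in K$, $t\in[0,1]$. For $t\in\mathbb{R}$, $S_t(h):=\{x\in K: h(x)\le t\}$; $\mathcal{B}(\bar x,\rho)$ is the open Euclidean ball. Given $\alpha\in\mathbb{R}$, $h$ is $\alpha$-quasiconvex at $\bar x\in K$ if there exist $\rho>0$ and $e\in\mathbb{R}^n$ with $\|e\|=1$ such that for all $y\in K\cap\mathcal{B}(\bar x,\rho)\cap S_{h(\bar x)}(h)$ one has $\langle e,y-\bar x\rangle\ge \alpha\|y-\bar x\|^2$. The function $h$ is CFZ-strongly quasiconvex on $K$ if for every $\bar x\in K$ there exists $\alpha(\bar x)>0$ such that $h$ is $\alpha(\bar x)$-quasiconvex at $\bar x$. *)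

theory Defs
  imports "HOL-Analysis.Analysis"
begin

definition strongly_quasiconvex_on :: "('a::real_inner) set \<Rightarrow> real \<Rightarrow> ('a \<Rightarrow> real) \<Rightarrow> bool" where
  "strongly_quasiconvex_on K \<gamma> h \<longleftrightarrow>
     (\<forall>x\<in>K. \<forall>y\<in>K. \<forall>t::real. 0 \<le> t \<and> t \<le> 1 \<longrightarrow>
        h (t *\<^sub>R y + (1 - t) *\<^sub>R x) \<le> max (h y) (h x) - t * (1 - t) * (\<gamma> / 2) * (norm (x - y))\<^sup>2)"

definition sublevel :: "'a set \<Rightarrow> ('a \<Rightarrow> real) \<Rightarrow> real \<Rightarrow> 'a set" where
  "sublevel K h t = {x\<in>K. h x \<le> t}"

definition alpha_quasiconvex_at :: "('a::real_inner) set \<Rightarrow> real \<Rightarrow> ('a \<Rightarrow> real) \<Rightarrow> 'a \<Rightarrow> bool" where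
  "alpha_quasiconvex_at K \<alpha> h xb \<longleftrightarrow>
     (\<exists>\<rho>>0. \<exists>e. norm e = 1 \<and>
        (\<forall>y\<in>K \<inter> ball xb \<rho> \<inter> sublevel K h (h xb). e \<bullet> (y - xb) \<ge> \<alpha> * (norm (y - xb))\<^sup>2))"

definition CFZ_strongly_quasiconvex_on :: "('a::real_inner) set \<Rightarrow> ('a \<Rightarrow> real) \<Rightarrow> bool" where
  "CFZ_strongly_quasiconvex_on K h \<longleftrightarrow>
     (\<forall>xb\<in>K. \<exists>\<alpha>>0. alpha_quasiconvex_at K \<alpha> h xb)"

definition C1_on :: "('a::real_inner) set \<Rightarrow> ('a \<Rightarrow> real) \<Rightarrow> bool" where
  "C1_on K h \<longleftrightarrow> (\<exists>g. (\<forall>x\<in>K. (h has_derivative (\<lambda>v. g x \<bullet> v)) (at x)) \<and> continuous_on K g)"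

end

theory Submission
  imports Defs
begin

text \<open>Along the segment from \<open>x\<close> to a point \<open>y\<close> of the sublevel set of \<open>h x\<close>, strong
  quasiconvexity makes \<open>h\<close> drop by at least \<open>t (1 - t) \<gamma>/2 \<parallel>y - x\<parallel>\<^sup>2\<close>; differentiating at \<open>t = 0\<close>
  gives \<open>\<nabla>h(x) \<bullet> (y - x) \<le> -\<gamma>/2 \<parallel>y - x\<parallel>\<^sup>2\<close>. If \<open>\<nabla>h(x) \<noteq> 0\<close>, the unit vector \<open>-\<nabla>h(x)/\<parallel>\<nabla>h(x)\<parallel>\<close>
  witnesses \<open>\<alpha>\<close>-quasiconvexity with \<open>\<alpha> = \<gamma>/(2\<parallel>\<nabla>h(x)\<parallel>)\<close>; if \<open>\<nabla>h(x) = 0\<close>, the inequality forces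
  the sublevel set to be \<open>{x}\<close> and any unit vector works.\<close>

lemma derivative_le_of_quadratic_decrease:
  fixes \<phi> :: "real \<Rightarrow> real"
  assumes "(\<phi> has_real_derivative D) (at_right 0)"
    and "\<And>t. 0 < t \<Longrightarrow> t < 1 \<Longrightarrow> \<phi> t - \<phi> 0 \<le> - t * (1 - t) * c"
  shows "D \<le> - c"
proof -
  have quotient_lim: "((\<lambda>t. (\<phi> t - \<phi> 0) / t) \<longlongrightarrow> D) (at_right 0)"
    using assms(1) unfolding has_field_derivative_iff by simp
  have bound_lim: "((\<lambda>t. - (1 - t) * c) \<longlongrightarrow> - (1 - 0) * c) (at_right (0::real))"
    by (intro tendsto_intros)
  have "\<forall>\<^sub>F t in at_right 0. (\<phi> t - \<phi> 0) / t \<le> - (1 - t) * c"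
  proof (rule eventually_at_rightI[of 0 1])
    fix t :: real assume t: "t \<in> {0<..<1}"
    then have "\<phi> t - \<phi> 0 \<le> (- (1 - t) * c) * t"
      using assms(2)[of t] by (simp add: algebra_simps)
    then show "(\<phi> t - \<phi> 0) / t \<le> - (1 - t) * c"
      using t by (simp add: pos_divide_le_eq)
  qed simp
  then show ?thesis
    using tendsto_le[OF trivial_limit_at_right_real bound_lim quotient_lim] by simp
qed

lemma strongly_quasiconvex_on_gradient_descent:
  fixes h :: "'a::real_inner \<Rightarrow> real"
  assumes "strongly_quasiconvex_on K \<gamma> h"
    and "(h has_derivative (\<lambda>v. g \<bullet> v)) (at x)"
    and "x \<in> K" and "y \<in> sublevel K h (h x)"
  shows "g \<bullet> (y - x) \<le> - (\<gamma> / 2) * (norm (y - x))\<^sup>2"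
proof -
  define d where "d = y - x"
  have "((\<lambda>t. x + t *\<^sub>R d) has_derivative (\<lambda>t. t *\<^sub>R d)) (at 0)"
    by (auto intro!: derivative_eq_intros)
  then have "((\<lambda>t. h (x + t *\<^sub>R d)) has_derivative (\<lambda>t. g \<bullet> (t *\<^sub>R d))) (at 0)"
    using has_derivative_compose assms(2) by fastforce
  then have "((\<lambda>t. h (x + t *\<^sub>R d)) has_real_derivative g \<bullet> d) (at_right 0)"
    by (simp add: has_field_derivative_def mult_commute_abs has_derivative_at_withinI)
  moreover have "h (x + t *\<^sub>R d) - h (x + 0 *\<^sub>R d) \<le> - t * (1 - t) * ((\<gamma> / 2) * (norm d)\<^sup>2)"
    if "0 < t" "t < 1" for t
  proof -
    have "h y \<le> h x" "y \<in> K"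
      using assms(4) by (auto simp: sublevel_def)
    moreover have "h (t *\<^sub>R y + (1 - t) *\<^sub>R x)
        \<le> max (h y) (h x) - t * (1 - t) * (\<gamma> / 2) * (norm (x - y))\<^sup>2"
      using assms(1,3) \<open>y \<in> K\<close> that unfolding strongly_quasiconvex_on_def by simp
    ultimately have "h (t *\<^sub>R y + (1 - t) *\<^sub>R x) \<le> h x - t * (1 - t) * (\<gamma> / 2) * (norm (x - y))\<^sup>2"
      by (simp add: max_absorb2)
    moreover have "t *\<^sub>R y + (1 - t) *\<^sub>R x = x + t *\<^sub>R d"
      by (simp add: d_def algebra_simps)
    ultimately show ?thesis
      by (simp add: d_def norm_minus_commute)
  qed
  ultimately have "g \<bullet> d \<le> - ((\<gamma> / 2) * (norm d)\<^sup>2)"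
    by (rule derivative_le_of_quadratic_decrease[of "\<lambda>t. h (x + t *\<^sub>R d)"])
  then show ?thesis
    by (simp add: d_def)
qed

lemma alpha_quasiconvex_at_of_gradient_descent:
  fixes h :: "'a::euclidean_space \<Rightarrow> real"
  assumes "c > 0"
    and descent: "\<And>y. y \<in> sublevel K h (h x) \<Longrightarrow> g \<bullet> (y - x) \<le> - c * (norm (y - x))\<^sup>2"
  shows "\<exists>\<alpha>>0. alpha_quasiconvex_at K \<alpha> h x"
proof (cases "g = 0")
  case True
  obtain b :: 'a where b: "b \<in> Basis"
    using nonempty_Basis by blast
  have sublevel_trivial: "y = x" if "y \<in> sublevel K h (h x)" for y
    using descent[OF that] True \<open>c > 0\<close> by (simp add: mult_le_0_iff)
  have "b \<bullet> (y - x) \<ge> 1 * (norm (y - x))\<^sup>2" if "y \<in> sublevel K h (h x)" for y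
    using sublevel_trivial[OF that] by simp
  then have "alpha_quasiconvex_at K 1 h x"
    unfolding alpha_quasiconvex_at_def using b
    by (intro exI[of _ "1::real"] conjI exI[of _ b]) auto
  then show ?thesis
    by (intro exI[of _ 1]) simp
next
  case False
  then have g_pos: "norm g > 0" by simp
  define e where "e = - (1 / norm g) *\<^sub>R g"
  have "e \<bullet> (y - x) \<ge> (c / norm g) * (norm (y - x))\<^sup>2"
    if "y \<in> sublevel K h (h x)" for y
  proof -
    have "c * (norm (y - x))\<^sup>2 / norm g \<le> - (g \<bullet> (y - x)) / norm g"
      using descent[OF that] g_pos by (intro divide_right_mono) auto
    then show ?thesis by (simp add: e_def)
  qed
  moreover have "norm e = 1"
    using g_pos by (simp add: e_def)
  ultimately have "alpha_quasiconvex_at K (c / norm g) h x"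
    unfolding alpha_quasiconvex_at_def
    by (intro exI[of _ "1::real"] exI[of _ e]) auto
  then show ?thesis
    using \<open>c > 0\<close> g_pos by (intro exI[of _ "c / norm g"]) simp
qed

theorem mainTheorem2:
  fixes K :: "(real ^ 'n) set" and h :: "real ^ 'n \<Rightarrow> real" and \<gamma> :: real
  assumes "K \<noteq> {}" and "open K" and "convex K"
    and "C1_on K h"
    and "\<gamma> > 0" and "strongly_quasiconvex_on K \<gamma> h"
  shows "CFZ_strongly_quasiconvex_on K h"
  unfolding CFZ_strongly_quasiconvex_on_def
proof
  fix x assume "x \<in> K"
  obtain g where "\<And>x. x \<in> K \<Longrightarrow> (h has_derivative (\<lambda>v. g x \<bullet> v)) (at x)"
    using \<open>C1_on K h\<close> unfolding C1_on_def by blast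
  then have "\<And>y. y \<in> sublevel K h (h x) \<Longrightarrow> g x \<bullet> (y - x) \<le> - (\<gamma> / 2) * (norm (y - x))\<^sup>2"
    using strongly_quasiconvex_on_gradient_descent[OF assms(6)] \<open>x \<in> K\<close> by blast
  then show "\<exists>\<alpha>>0. alpha_quasiconvex_at K \<alpha> h x"
    using \<open>\<gamma> > 0\<close> by (intro alpha_quasiconvex_at_of_gradient_descent[of "\<gamma> / 2"]) auto
qed

end
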